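(* Let $\mathbf{M}$ be symmetric, $\epsilon>0$, and $\mathbf{X}=[\bm{x}_1,\dots,\bm{x}_r]\in\mathrm{St}(N,r)$ with $\|\mathrm{grad}\,g(\mathbf{X})\|_F\le\epsilon$. Write $\mathbf{X}^\top\mathbf{M}\mathbf{X}=\mathbf{D}_{\mathbf{M}}+\mathbf{E}_{\mathbf{M}}$ with $\mathbf{D}_{\mathbf{M}}$ its diagonal part and $\mathbf{E}_{\mathbf{M}}$ its off-diagonal part. Then $\|\mathbf{E}_{\mathbf{M}}\|_F\le2\epsilon$, $\|\mathbf{X}\mathbf{X}^\top\mathbf{M}\mathbf{X}-\mathbf{M}\mathbf{X}\|_F\le\epsilon$, $\|\mathbf{X}\mathbf{D}_{\mathbf{M}}-\mathbf{M}\mathbf{X}\|_F\le3\epsilon$, and for each $j\in[r]$ there is an eigenvalue $\lambda_{i_j}$ of $\mathbf{M}$ with $|\bm{x}_j^\top\mathbf{M}\bm{x}_j-\lambda_{i_j}|\le3\epsilon$.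
   Context: $\mathrm{St}(N,r)=\{\mathbf{X}\in\mathbb{R}^{N\times r}:\mathbf{X}^\top\mathbf{X}=\mathbf{I}_r\}$, $\mathbf{N}=\mathrm{diag}(r,r-1,\dots,1)$, $g(\mathbf{X})=-\tfrac12\mathrm{tr}(\mathbf{X}^\top\mathbf{M}\mathbf{X}\mathbf{N})$ on $\mathrm{St}(N,r)$ with Riemannian gradient $\mathrm{grad}\,g(\mathbf{X})=(\mathbf{X}\mathbf{X}^\top-\mathbf{I}_N)\mathbf{M}\mathbf{X}\mathbf{N}-\tfrac12\mathbf{X}[\mathbf{X}^\top\mathbf{M}\mathbf{X},\mathbf{N}]$, $[\mathbf{A},\mathbf{B}]=\mathbf{A}\mathbf{B}-\mathbf{B}\mathbf{A}$. *)

theory Defs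
  imports Complex_Main "Jordan_Normal_Form.Char_Poly"
begin

definition frob_norm :: "real mat \<Rightarrow> real" where
  "frob_norm A = sqrt (\<Sum>i<dim_row A. \<Sum>j<dim_col A. (A $$ (i, j))\<^sup>2)"

definition stiefel :: "nat \<Rightarrow> nat \<Rightarrow> real mat set" where
  "stiefel N r = {X. X \<in> carrier_mat N r \<and> transpose_mat X * X = 1\<^sub>m r}"

text \<open>N = diag(r, r-1, ..., 1) (0-based index i carries weight r - i).\<close>
definition Nmat :: "nat \<Rightarrow> real mat" where
  "Nmat r = mat r r (\<lambda>(i, j). if i = j then real (r - i) else 0)"

definition commutator :: "real mat \<Rightarrow> real mat \<Rightarrow> real mat" where
  "commutator A B = A * B - B * A"

text \<open>Riemannian gradient of g(X) = -1/2 tr(X^T M X N) on St(N,r).\<close>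
definition grad_g :: "real mat \<Rightarrow> real mat \<Rightarrow> real mat" where
  "grad_g M X =
     (X * transpose_mat X - 1\<^sub>m (dim_row X)) * M * X * Nmat (dim_col X)
     - (1/2) \<cdot>\<^sub>m (X * commutator (transpose_mat X * M * X) (Nmat (dim_col X)))"

definition diag_part :: "real mat \<Rightarrow> real mat" where
  "diag_part A = mat (dim_row A) (dim_col A) (\<lambda>(i, j). if i = j then A $$ (i, j) else 0)"

definition offdiag_part :: "real mat \<Rightarrow> real mat" where
  "offdiag_part A = A - diag_part A"

end

theory Submission
  imports Defs
begin

text \<open>With \<open>S = X\<^sup>T M X\<close> and the residual \<open>P = X X\<^sup>T M X - M X\<close>, the gradient is
  \<open>P N - 1/2 X [S, N]\<close>. Since \<open>X\<^sup>T P = 0\<close> and \<open>X\<close> is an isometry, the two terms are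
  Frobenius-orthogonal, so \<open>\<parallel>P N\<parallel>\<^sup>2 + 1/4 \<parallel>[S, N]\<parallel>\<^sup>2 \<le> \<epsilon>\<^sup>2\<close>. The diagonal weights of \<open>N\<close>
  are at least one and pairwise differ by at least one, hence \<open>\<parallel>P\<parallel> \<le> \<parallel>P N\<parallel>\<close> and
  \<open>\<parallel>E\<parallel> \<le> \<parallel>[S, N]\<parallel>\<close>. The residual \<open>X D - M X = P - X E\<close> splits orthogonally in the
  same way. Its \<open>j\<close>-th column is \<open>d x\<^sub>j - M x\<^sub>j\<close> with \<open>d = x\<^sub>j\<^sup>T M x\<^sub>j\<close>, and for symmetric
  \<open>M\<close> and unit \<open>x\<close> some eigenvalue lies within \<open>\<parallel>M x - d x\<parallel>\<close> of \<open>d\<close>. Without appeal to the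
  spectral theorem, this last fact is proved variationally: the infimum of the Rayleigh quotient
  of the positive semidefinite matrix \<open>(M - d)\<^sup>2\<close> is an eigenvalue, since
  otherwise \<open>(M - d)\<^sup>2\<close> minus it would be invertible and hence have a quadratic form
  bounded away from zero on the unit sphere.\<close>

section \<open>Frobenius norm\<close>

definition frob_norm_sq :: "real mat \<Rightarrow> real" where
  "frob_norm_sq A = (\<Sum>i<dim_row A. \<Sum>j<dim_col A. (A $$ (i, j))\<^sup>2)"

lemma frob_norm_eq_sqrt: "frob_norm A = sqrt (frob_norm_sq A)"
  unfolding frob_norm_def frob_norm_sq_def ..

lemma frob_norm_sq_nonneg: "frob_norm_sq A \<ge> 0"
  unfolding frob_norm_sq_def by (intro sum_nonneg) auto

lemma frob_norm_le_iff: "0 \<le> c \<Longrightarrow> frob_norm A \<le> c \<longleftrightarrow> frob_norm_sq A \<le> c\<^sup>2"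
  unfolding frob_norm_eq_sqrt by (metis real_le_lsqrt sqrt_le_D)

lemma frob_norm_sq_rows:
  assumes "A \<in> carrier_mat n m"
  shows "frob_norm_sq A = (\<Sum>i<n. row A i \<bullet> row A i)"
  using assms unfolding frob_norm_sq_def
  by (intro sum.cong) (auto simp: scalar_prod_def power2_eq_square lessThan_atLeast0)

lemma frob_norm_sq_diag_transpose_mult:
  assumes "A \<in> carrier_mat n m"
  shows "frob_norm_sq A = (\<Sum>j<m. (transpose_mat A * A) $$ (j, j))"
proof -
  have "frob_norm_sq A = (\<Sum>j<m. \<Sum>i<n. (A $$ (i, j))\<^sup>2)"
    unfolding frob_norm_sq_def using assms by (simp add: sum.swap[of _ "{..<n}"])
  also have "\<dots> = (\<Sum>j<m. (transpose_mat A * A) $$ (j, j))"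
    using assms by (intro sum.cong) (auto simp: scalar_prod_def lessThan_atLeast0 power2_eq_square)
  finally show ?thesis .
qed

lemma col_scalar_prod_le_frob_norm_sq:
  assumes A: "A \<in> carrier_mat n m" and j: "j < m"
  shows "col A j \<bullet> col A j \<le> frob_norm_sq A"
proof -
  have "col A j \<bullet> col A j = (\<Sum>i<n. (A $$ (i, j))\<^sup>2)"
    using A j by (simp add: scalar_prod_def lessThan_atLeast0 power2_eq_square)
  also have "\<dots> \<le> (\<Sum>i<n. \<Sum>l<m. (A $$ (i, l))\<^sup>2)"
    by (intro sum_mono member_le_sum) (use j in auto)
  finally show ?thesis unfolding frob_norm_sq_def using A by simp
qed

lemma frob_norm_sq_mono:
  assumes "A \<in> carrier_mat n m" and "B \<in> carrier_mat n m"
    and "\<And>i j. i < n \<Longrightarrow> j < m \<Longrightarrow> \<bar>A $$ (i, j)\<bar> \<le> \<bar>B $$ (i, j)\<bar>"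
  shows "frob_norm_sq A \<le> frob_norm_sq B"
  unfolding frob_norm_sq_def using assms
  by (auto intro!: sum_mono simp: abs_le_square_iff)

lemma frob_norm_sq_diff_orthogonal:
  assumes A: "A \<in> carrier_mat n m" and Q: "Q \<in> carrier_mat n m"
    and orth: "transpose_mat A * Q = 0\<^sub>m m m"
  shows "frob_norm_sq (A - c \<cdot>\<^sub>m Q) = frob_norm_sq A + c\<^sup>2 * frob_norm_sq Q"
proof -
  have cross: "(\<Sum>i<n. \<Sum>j<m. A $$ (i, j) * Q $$ (i, j)) = 0"
  proof -
    have "(\<Sum>i<n. \<Sum>j<m. A $$ (i, j) * Q $$ (i, j)) = (\<Sum>j<m. (transpose_mat A * Q) $$ (j, j))"
      using A Q by (subst sum.swap) (auto intro!: sum.cong simp: scalar_prod_def lessThan_atLeast0)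
    then show ?thesis using orth by simp
  qed
  have "frob_norm_sq (A - c \<cdot>\<^sub>m Q) = (\<Sum>i<n. \<Sum>j<m.
      (A $$ (i, j))\<^sup>2 + c\<^sup>2 * (Q $$ (i, j))\<^sup>2 - 2 * c * (A $$ (i, j) * Q $$ (i, j)))"
    unfolding frob_norm_sq_def using A Q by (intro sum.cong) (auto simp: power2_eq_square algebra_simps)
  also have "\<dots> = frob_norm_sq A + c\<^sup>2 * frob_norm_sq Q
      - 2 * c * (\<Sum>i<n. \<Sum>j<m. A $$ (i, j) * Q $$ (i, j))"
    unfolding frob_norm_sq_def using A Q by (simp add: sum.distrib sum_subtractf sum_distrib_left)
  finally show ?thesis unfolding cross by simp
qed

lemma frob_norm_sq_mult_isometry:
  assumes X: "X \<in> carrier_mat n r" and E: "E \<in> carrier_mat r m"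
    and XX: "transpose_mat X * X = 1\<^sub>m r"
  shows "frob_norm_sq (X * E) = frob_norm_sq E"
proof -
  have "transpose_mat (X * E) * (X * E) = transpose_mat E * transpose_mat X * (X * E)"
    using X E by (simp add: transpose_mult)
  also have "\<dots> = transpose_mat E * (transpose_mat X * (X * E))"
    by (rule assoc_mult_mat[of _ m r _ n]) (use X E in auto)
  also have "transpose_mat X * (X * E) = transpose_mat X * X * E"
    by (rule assoc_mult_mat[symmetric, of _ r n _ r]) (use X E in auto)
  also have "transpose_mat X * X * E = E" using XX E by simp
  finally show ?thesis
    using frob_norm_sq_diag_transpose_mult[of "X * E" n m] frob_norm_sq_diag_transpose_mult[OF E] X E
    by simp
qed

section \<open>Eigenvalues of real symmetric matrices\<close>

lemma scalar_prod_self_nonneg: "0 \<le> (v :: real vec) \<bullet> v"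
  using conjugate_square_ge_0_vec[of v] by simp

lemma nonneg_quadratic_discriminant:
  fixes a b c :: real
  assumes nonneg: "\<And>t. 0 \<le> a + 2 * t * b + t\<^sup>2 * c" and c: "0 \<le> c"
  shows "b\<^sup>2 \<le> a * c"
proof (cases "c = 0")
  case True
  have "b = 0"
  proof (rule ccontr)
    assume b: "b \<noteq> 0"
    have "0 \<le> a + 2 * (- (\<bar>a\<bar> + 1) / (2 * b)) * b + (- (\<bar>a\<bar> + 1) / (2 * b))\<^sup>2 * c"
      by (rule nonneg)
    also have "\<dots> = a - (\<bar>a\<bar> + 1)" using b True by (simp add: field_simps)
    finally show False by linarith
  qed
  then show ?thesis using True by simp
next
  case False
  with c have c: "c > 0" by simp
  have "0 \<le> a + 2 * (- b / c) * b + (- b / c)\<^sup>2 * c" by (rule nonneg)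
  also have "\<dots> = (a * c - b\<^sup>2) / c" using c by (simp add: field_simps power2_eq_square)
  finally show ?thesis using c by (simp add: zero_le_divide_iff)
qed

lemma symmetric_scalar_prod_mult_vec_swap:
  fixes C :: "real mat"
  assumes C: "C \<in> carrier_mat n n" and sym: "transpose_mat C = C"
    and v: "v \<in> carrier_vec n" and w: "w \<in> carrier_vec n"
  shows "w \<bullet> (C *\<^sub>v v) = v \<bullet> (C *\<^sub>v w)"
proof -
  have "w \<bullet> (C *\<^sub>v v) = (transpose_mat C *\<^sub>v w) \<bullet> v"
    by (rule transpose_vec_mult_scalar[OF C v w, symmetric])
  also have "\<dots> = v \<bullet> (C *\<^sub>v w)"
    using sym C v w by (simp add: comm_scalar_prod[of _ n])
  finally show ?thesis .
qed

lemma psd_cauchy_schwarz: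
  fixes C :: "real mat"
  assumes C: "C \<in> carrier_mat n n" and sym: "transpose_mat C = C"
    and psd: "\<And>u. u \<in> carrier_vec n \<Longrightarrow> 0 \<le> u \<bullet> (C *\<^sub>v u)"
    and v: "v \<in> carrier_vec n" and w: "w \<in> carrier_vec n"
  shows "(v \<bullet> (C *\<^sub>v w))\<^sup>2 \<le> (v \<bullet> (C *\<^sub>v v)) * (w \<bullet> (C *\<^sub>v w))"
proof (rule nonneg_quadratic_discriminant)
  show "0 \<le> w \<bullet> (C *\<^sub>v w)" using psd w by auto
  fix t :: real
  have "C *\<^sub>v (v + t \<cdot>\<^sub>v w) = C *\<^sub>v v + t \<cdot>\<^sub>v (C *\<^sub>v w)"
    using C v w by (simp add: mult_add_distrib_mat_vec mult_mat_vec)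
  then have "(v + t \<cdot>\<^sub>v w) \<bullet> (C *\<^sub>v (v + t \<cdot>\<^sub>v w))
     = v \<bullet> (C *\<^sub>v v) + t * (v \<bullet> (C *\<^sub>v w)) + t * (w \<bullet> (C *\<^sub>v v)) + t * t * (w \<bullet> (C *\<^sub>v w))"
    using C v w
    by (simp add: add_scalar_prod_distrib[of _ n] scalar_prod_add_distrib[of _ n] algebra_simps)
  also have "w \<bullet> (C *\<^sub>v v) = v \<bullet> (C *\<^sub>v w)"
    by (rule symmetric_scalar_prod_mult_vec_swap[OF C sym v w])
  finally have "(v + t \<cdot>\<^sub>v w) \<bullet> (C *\<^sub>v (v + t \<cdot>\<^sub>v w))
     = v \<bullet> (C *\<^sub>v v) + 2 * t * (v \<bullet> (C *\<^sub>v w)) + t\<^sup>2 * (w \<bullet> (C *\<^sub>v w))"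
    by (simp add: power2_eq_square algebra_simps)
  moreover have "0 \<le> (v + t \<cdot>\<^sub>v w) \<bullet> (C *\<^sub>v (v + t \<cdot>\<^sub>v w))" using psd v w by auto
  ultimately show "0 \<le> v \<bullet> (C *\<^sub>v v) + 2 * t * (v \<bullet> (C *\<^sub>v w)) + t\<^sup>2 * (w \<bullet> (C *\<^sub>v w))"
    by simp
qed

lemma scalar_prod_cauchy_schwarz:
  fixes v w :: "real vec"
  assumes "v \<in> carrier_vec n" and "w \<in> carrier_vec n"
  shows "(v \<bullet> w)\<^sup>2 \<le> (v \<bullet> v) * (w \<bullet> w)"
  using psd_cauchy_schwarz[of "1\<^sub>m n" n v w] assms by (simp add: scalar_prod_self_nonneg)

lemma mult_mat_vec_norm_sq_le:
  fixes C :: "real mat"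
  assumes C: "C \<in> carrier_mat n m" and w: "w \<in> carrier_vec m"
  shows "(C *\<^sub>v w) \<bullet> (C *\<^sub>v w) \<le> frob_norm_sq C * (w \<bullet> w)"
proof -
  have "(C *\<^sub>v w) \<bullet> (C *\<^sub>v w) = (\<Sum>i<n. (row C i \<bullet> w)\<^sup>2)"
    using C by (simp add: scalar_prod_def[of "C *\<^sub>v w"] power2_eq_square lessThan_atLeast0)
  also have "\<dots> \<le> (\<Sum>i<n. (row C i \<bullet> row C i) * (w \<bullet> w))"
    by (intro sum_mono scalar_prod_cauchy_schwarz[of _ m]) (use C w in auto)
  finally show ?thesis by (simp add: frob_norm_sq_rows[OF C] sum_distrib_right)
qed

lemma char_matrix_mult_vec:
  fixes A :: "real mat"
  assumes "A \<in> carrier_mat n n" and "u \<in> carrier_vec n"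
  shows "char_matrix A e *\<^sub>v u = A *\<^sub>v u - e \<cdot>\<^sub>v u"
proof -
  have "((- e) \<cdot>\<^sub>m 1\<^sub>m n) *\<^sub>v u = - (e \<cdot>\<^sub>v u)" using assms(2) by auto
  then show ?thesis
    using assms unfolding char_matrix_def
    by (simp add: add_mult_distrib_mat_vec[of _ n n] minus_add_uminus_vec[of _ n])
qed

lemma transpose_char_matrix:
  assumes "A \<in> carrier_mat n n" and "transpose_mat A = A"
  shows "transpose_mat (char_matrix A e) = char_matrix A e"
  using assms by (intro eq_matI) (auto simp: char_matrix_def, metis assms carrier_matD index_transpose_mat(1))

lemma eigenvalue_char_matrix_iff:
  fixes A :: "real mat"
  assumes A: "A \<in> carrier_mat n n"
  shows "eigenvalue (char_matrix A e) s \<longleftrightarrow> eigenvalue A (e + s)"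
proof -
  have "char_matrix A e *\<^sub>v v = s \<cdot>\<^sub>v v \<longleftrightarrow> A *\<^sub>v v = (e + s) \<cdot>\<^sub>v v"
    if "v \<in> carrier_vec n" for v
    using that A by (auto simp: char_matrix_mult_vec vec_eq_iff algebra_simps)
  moreover have "dim_row (char_matrix A e) = n" "dim_row A = n"
    using carrier_matD(1)[OF char_matrix_closed[OF A]] A by auto
  ultimately show ?thesis unfolding eigenvalue_def eigenvector_def by auto
qed

lemma eigenvalue_of_mult_self:
  fixes A :: "real mat"
  assumes A: "A \<in> carrier_mat n n" and ev: "eigenvalue (A * A) (t\<^sup>2)"
  shows "eigenvalue A t \<or> eigenvalue A (- t)"
proof -
  obtain v where v: "v \<in> carrier_vec n" "v \<noteq> 0\<^sub>v n" and AAv: "A *\<^sub>v (A *\<^sub>v v) = t\<^sup>2 \<cdot>\<^sub>v v"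
    using ev A unfolding eigenvalue_def eigenvector_def by auto
  define w where "w = A *\<^sub>v v + t \<cdot>\<^sub>v v"
  have w: "w \<in> carrier_vec n" unfolding w_def using A v by simp
  show ?thesis
  proof (cases "w = 0\<^sub>v n")
    case True
    then have "A *\<^sub>v v = (- t) \<cdot>\<^sub>v v"
      unfolding w_def using A v
      by (auto simp: vec_eq_iff algebra_simps)
    then show ?thesis using A v unfolding eigenvalue_def eigenvector_def by auto
  next
    case False
    have "A *\<^sub>v w = A *\<^sub>v (A *\<^sub>v v) + t \<cdot>\<^sub>v (A *\<^sub>v v)"
      unfolding w_def using A v by (simp add: mult_add_distrib_mat_vec[of _ n n] mult_mat_vec[of _ n n])
    also have "\<dots> = t \<cdot>\<^sub>v w"
      unfolding AAv w_def using A v by (intro eq_vecI) (auto simp: algebra_simps power2_eq_square)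
    finally show ?thesis using A w False unfolding eigenvalue_def eigenvector_def by auto
  qed
qed

lemma quadratic_form_lower_bound_homogeneous:
  fixes B :: "real mat"
  assumes B: "B \<in> carrier_mat n n"
    and unit: "\<And>v. v \<in> carrier_vec n \<Longrightarrow> v \<bullet> v = 1 \<Longrightarrow> c \<le> v \<bullet> (B *\<^sub>v v)"
    and u: "u \<in> carrier_vec n"
  shows "c * (u \<bullet> u) \<le> u \<bullet> (B *\<^sub>v u)"
proof (cases "u \<bullet> u = 0")
  case True
  then have "u = 0\<^sub>v n" using conjugate_square_eq_0_vec[OF u] by simp
  then show ?thesis using B by simp
next
  case False
  define q where "q = u \<bullet> u"
  have q: "q > 0" using False scalar_prod_self_nonneg[of u] unfolding q_def by linarith
  define z where "z = (1 / sqrt q) \<cdot>\<^sub>v u"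
  have z: "z \<in> carrier_vec n" unfolding z_def using u by simp
  have "z \<bullet> z = q / (sqrt q)\<^sup>2" unfolding z_def q_def using u by (simp add: power2_eq_square)
  then have "c \<le> z \<bullet> (B *\<^sub>v z)" using unit[OF z] q by simp
  also have "z \<bullet> (B *\<^sub>v z) = (u \<bullet> (B *\<^sub>v u)) / q"
    unfolding z_def using u B q by (simp add: mult_mat_vec power2_eq_square)
  finally show ?thesis using q unfolding q_def by (simp add: pos_le_divide_eq)
qed

lemma invertible_psd_quadratic_form_bounded_below:
  fixes C C' :: "real mat"
  assumes C: "C \<in> carrier_mat n n" and sym: "transpose_mat C = C"
    and psd: "\<And>u. u \<in> carrier_vec n \<Longrightarrow> 0 \<le> u \<bullet> (C *\<^sub>v u)"
    and C': "C' \<in> carrier_mat n n" and inv: "C' * C = 1\<^sub>m n"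
  shows "\<exists>c>0. \<forall>v\<in>carrier_vec n. v \<bullet> v = 1 \<longrightarrow> c \<le> v \<bullet> (C *\<^sub>v v)"
proof -
  define K where "K = frob_norm_sq C"
  define K' where "K' = frob_norm_sq C'"
  have K: "K \<ge> 0" and K': "K' \<ge> 0" unfolding K_def K'_def by (simp_all add: frob_norm_sq_nonneg)
  define \<kappa> where "\<kappa> = K' * sqrt K + 1"
  have \<kappa>: "\<kappa> > 0" unfolding \<kappa>_def using K K' by (simp add: add_nonneg_pos)
  have "1 / \<kappa> \<le> v \<bullet> (C *\<^sub>v v)" if v: "v \<in> carrier_vec n" "v \<bullet> v = 1" for v
  proof -
    define w where "w = C *\<^sub>v v"
    define L where "L = w \<bullet> w"
    have w: "w \<in> carrier_vec n" unfolding w_def using C v by simp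
    have "C' *\<^sub>v w = v" unfolding w_def using C C' v inv by (simp flip: assoc_mult_mat_vec)
    then have L: "1 \<le> K' * L"
      using mult_mat_vec_norm_sq_le[OF C' w] v unfolding K'_def L_def by simp
    then have L_pos: "L > 0"
      using K' scalar_prod_self_nonneg[of w] unfolding L_def
      by (metis mult_eq_0_iff not_one_le_zero order_le_less)
    have "(w \<bullet> (C *\<^sub>v w))\<^sup>2 \<le> (w \<bullet> w) * ((C *\<^sub>v w) \<bullet> (C *\<^sub>v w))"
      by (rule scalar_prod_cauchy_schwarz[of _ n]) (use w C in auto)
    also have "\<dots> \<le> L * (K * L)" unfolding L_def K_def
      by (intro mult_left_mono mult_mat_vec_norm_sq_le[OF C w] scalar_prod_self_nonneg)
    finally have "(w \<bullet> (C *\<^sub>v w))\<^sup>2 \<le> (sqrt K * L)\<^sup>2"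
      using K by (simp add: power2_eq_square ac_simps)
    then have wCw: "w \<bullet> (C *\<^sub>v w) \<le> sqrt K * L"
      using L_pos K by (meson power2_le_imp_le real_sqrt_ge_zero less_imp_le mult_nonneg_nonneg)
    have vCv: "0 \<le> v \<bullet> (C *\<^sub>v v)" using psd v by simp
    have "L = v \<bullet> (C *\<^sub>v w)"
      unfolding L_def w_def by (rule symmetric_scalar_prod_mult_vec_swap[OF C sym v(1)]) (use w in \<open>simp add: w_def\<close>)
    then have "L\<^sup>2 \<le> (v \<bullet> (C *\<^sub>v v)) * (w \<bullet> (C *\<^sub>v w))"
      using psd_cauchy_schwarz[OF C sym psd v(1) w] by simp
    also have "\<dots> \<le> (v \<bullet> (C *\<^sub>v v)) * (sqrt K * L)" by (rule mult_left_mono[OF wCw vCv])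
    finally have "L \<le> (v \<bullet> (C *\<^sub>v v)) * sqrt K"
      using L_pos by (simp add: power2_eq_square mult.commute mult.left_commute)
    then have "1 \<le> K' * ((v \<bullet> (C *\<^sub>v v)) * sqrt K)"
      using L mult_left_mono[OF _ K'] by (meson order_trans)
    also have "\<dots> \<le> \<kappa> * (v \<bullet> (C *\<^sub>v v))"
      unfolding \<kappa>_def using vCv by (simp add: algebra_simps)
    finally show ?thesis using \<kappa> by (simp add: divide_le_eq mult.commute)
  qed
  then show ?thesis using \<kappa> by (intro exI[of _ "1 / \<kappa>"]) auto
qed

lemma psd_eigenvalue_le_quadratic_form:
  fixes B :: "real mat"
  assumes B: "B \<in> carrier_mat n n" and sym: "transpose_mat B = B"
    and psd: "\<And>u. u \<in> carrier_vec n \<Longrightarrow> 0 \<le> u \<bullet> (B *\<^sub>v u)"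
    and x: "x \<in> carrier_vec n" and x_unit: "x \<bullet> x = 1"
  shows "\<exists>\<nu>. eigenvalue B \<nu> \<and> 0 \<le> \<nu> \<and> \<nu> \<le> x \<bullet> (B *\<^sub>v x)"
proof -
  define S where "S = (\<lambda>v. v \<bullet> (B *\<^sub>v v)) ` {v \<in> carrier_vec n. v \<bullet> v = 1}"
  define \<nu> where "\<nu> = Inf S"
  have S_ne: "S \<noteq> {}" using x x_unit unfolding S_def by auto
  have S_bdd: "bdd_below S" unfolding S_def bdd_below_def using psd by auto
  have \<nu>_le: "\<nu> \<le> v \<bullet> (B *\<^sub>v v)" if "v \<in> carrier_vec n" "v \<bullet> v = 1" for v
    unfolding \<nu>_def by (rule cInf_lower[OF _ S_bdd]) (use that in \<open>auto simp: S_def\<close>)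
  have \<nu>_nonneg: "0 \<le> \<nu>" unfolding \<nu>_def by (rule cInf_greatest[OF S_ne]) (auto simp: S_def psd)
  define C where "C = char_matrix B \<nu>"
  have C: "C \<in> carrier_mat n n" unfolding C_def using B by simp
  have C_sym: "transpose_mat C = C" unfolding C_def by (rule transpose_char_matrix[OF B sym])
  have C_form: "u \<bullet> (C *\<^sub>v u) = u \<bullet> (B *\<^sub>v u) - \<nu> * (u \<bullet> u)" if "u \<in> carrier_vec n" for u
    unfolding C_def using that B by (simp add: char_matrix_mult_vec scalar_prod_minus_distrib[of _ n])
  have C_psd: "0 \<le> u \<bullet> (C *\<^sub>v u)" if "u \<in> carrier_vec n" for u
    using quadratic_form_lower_bound_homogeneous[OF B \<nu>_le that] C_form[OF that] by simp
  have "det C = 0"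
  proof (rule ccontr)
    assume "det C \<noteq> 0"
    from det_non_zero_imp_unit[OF C this, of "()"]
    obtain C' where "C' \<in> carrier_mat n n" "C' * C = 1\<^sub>m n"
      unfolding Units_def ring_mat_def by auto
    then obtain c where c: "c > 0" and c_le: "\<And>v. v \<in> carrier_vec n \<Longrightarrow> v \<bullet> v = 1 \<Longrightarrow> c \<le> v \<bullet> (C *\<^sub>v v)"
      using invertible_psd_quadratic_form_bounded_below[OF C C_sym C_psd] by blast
    have "\<nu> + c \<le> Inf S"
    proof (rule cInf_greatest[OF S_ne])
      fix y assume "y \<in> S"
      then obtain v where "v \<in> carrier_vec n" "v \<bullet> v = 1" "y = v \<bullet> (B *\<^sub>v v)" unfolding S_def by auto
      then show "\<nu> + c \<le> y" using c_le C_form by fastforce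
    qed
    then show False using c unfolding \<nu>_def by simp
  qed
  then have "eigenvalue B \<nu>" unfolding C_def by (simp add: eigenvalue_det[OF B])
  then show ?thesis using \<nu>_nonneg \<nu>_le[OF x x_unit] by blast
qed

lemma symmetric_eigenvalue_near:
  fixes M :: "real mat"
  assumes M: "M \<in> carrier_mat n n" and sym: "transpose_mat M = M"
    and x: "x \<in> carrier_vec n" and x_unit: "x \<bullet> x = 1"
  shows "\<exists>\<mu>. eigenvalue M \<mu> \<and> (d - \<mu>)\<^sup>2 \<le> (M *\<^sub>v x - d \<cdot>\<^sub>v x) \<bullet> (M *\<^sub>v x - d \<cdot>\<^sub>v x)"
proof -
  define A where "A = char_matrix M d"
  have A: "A \<in> carrier_mat n n" unfolding A_def using M by simp
  have A_sym: "transpose_mat A = A" unfolding A_def by (rule transpose_char_matrix[OF M sym])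
  have AA: "A * A \<in> carrier_mat n n" using A by simp
  have AA_form: "u \<bullet> (A * A *\<^sub>v u) = (A *\<^sub>v u) \<bullet> (A *\<^sub>v u)" if "u \<in> carrier_vec n" for u
    using symmetric_scalar_prod_mult_vec_swap[OF A A_sym that, of "A *\<^sub>v u"] A that by simp
  have AA_sym: "transpose_mat (A * A) = A * A" using A A_sym by (simp add: transpose_mult[of _ n n])
  obtain \<nu> where ev: "eigenvalue (A * A) \<nu>" and \<nu>: "0 \<le> \<nu>" "\<nu> \<le> x \<bullet> (A * A *\<^sub>v x)"
    using psd_eigenvalue_le_quadratic_form[OF AA AA_sym _ x x_unit] AA_form scalar_prod_self_nonneg
    by metis
  define t where "t = sqrt \<nu>"
  have t: "t\<^sup>2 = \<nu>" unfolding t_def using \<nu> by simp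
  have "eigenvalue A t \<or> eigenvalue A (- t)"
    by (rule eigenvalue_of_mult_self[OF A]) (use ev t in simp)
  then obtain \<mu> where "eigenvalue M \<mu>" "(d - \<mu>)\<^sup>2 = \<nu>"
    unfolding A_def eigenvalue_char_matrix_iff[OF M] using t by fastforce
  moreover have "\<nu> \<le> (M *\<^sub>v x - d \<cdot>\<^sub>v x) \<bullet> (M *\<^sub>v x - d \<cdot>\<^sub>v x)"
    using \<nu>(2) AA_form[OF x] unfolding A_def char_matrix_mult_vec[OF M x] by simp
  ultimately show ?thesis by auto
qed

section \<open>The gradient on the Stiefel manifold\<close>

lemma mult_diag_mat_right:
  assumes A: "A \<in> carrier_mat n m" and i: "i < n" and j: "j < m"
  shows "(A * mat m m (\<lambda>(k, l). if k = l then g k l else 0)) $$ (i, j) = A $$ (i, j) * g j j"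
proof -
  have "(A * mat m m (\<lambda>(k, l). if k = l then g k l else 0)) $$ (i, j)
      = (\<Sum>k\<in>{0..<m}. A $$ (i, k) * (if k = j then g k j else 0))"
    using A i j by (simp add: scalar_prod_def)
  also have "\<dots> = (\<Sum>k\<in>{0..<m}. if k = j then A $$ (i, j) * g j j else 0)"
    by (intro sum.cong) auto
  also have "\<dots> = A $$ (i, j) * g j j" using j by simp
  finally show ?thesis .
qed

lemma mult_diag_mat_left:
  assumes A: "A \<in> carrier_mat m n" and i: "i < m" and j: "j < n"
  shows "(mat m m (\<lambda>(k, l). if k = l then g k l else 0) * A) $$ (i, j) = g i i * A $$ (i, j)"
proof -
  have "(mat m m (\<lambda>(k, l). if k = l then g k l else 0) * A) $$ (i, j)
      = (\<Sum>k\<in>{0..<m}. (if i = k then g i k else 0) * A $$ (k, j))"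
    using A i j by (simp add: scalar_prod_def)
  also have "\<dots> = (\<Sum>k\<in>{0..<m}. if k = i then g i i * A $$ (i, j) else 0)"
    by (intro sum.cong) auto
  also have "\<dots> = g i i * A $$ (i, j)" using i by simp
  finally show ?thesis .
qed

lemma dim_Nmat [simp]: "dim_row (Nmat r) = r" "dim_col (Nmat r) = r"
  unfolding Nmat_def by simp_all

lemma Nmat_carrier: "Nmat r \<in> carrier_mat r r"
  by (simp add: carrier_matI)

lemma mult_Nmat_index:
  assumes "A \<in> carrier_mat n r" "i < n" "j < r"
  shows "(A * Nmat r) $$ (i, j) = A $$ (i, j) * real (r - j)"
  unfolding Nmat_def using mult_diag_mat_right[OF assms, of "\<lambda>k l. real (r - k)"] by simp

lemma Nmat_mult_index:
  assumes "A \<in> carrier_mat r n" "i < r" "j < n"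
  shows "(Nmat r * A) $$ (i, j) = real (r - i) * A $$ (i, j)"
  unfolding Nmat_def using mult_diag_mat_left[OF assms, of "\<lambda>k l. real (r - k)"] by simp

lemma frob_norm_sq_le_mult_Nmat:
  assumes A: "A \<in> carrier_mat n r"
  shows "frob_norm_sq A \<le> frob_norm_sq (A * Nmat r)"
proof (rule frob_norm_sq_mono[OF A])
  show "A * Nmat r \<in> carrier_mat n r" using A Nmat_carrier by simp
  fix i j assume ij: "i < n" "j < r"
  have "\<bar>A $$ (i, j)\<bar> * 1 \<le> \<bar>A $$ (i, j)\<bar> * real (r - j)"
    by (rule mult_left_mono) (use ij in auto)
  then show "\<bar>A $$ (i, j)\<bar> \<le> \<bar>(A * Nmat r) $$ (i, j)\<bar>"
    by (simp add: mult_Nmat_index[OF A ij] abs_mult)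
qed

lemma offdiag_part_index:
  assumes "S \<in> carrier_mat r r" "i < r" "j < r"
  shows "offdiag_part S $$ (i, j) = (if i = j then 0 else S $$ (i, j))"
  using assms unfolding offdiag_part_def diag_part_def by simp

lemma frob_norm_sq_offdiag_le_commutator_Nmat:
  assumes S: "S \<in> carrier_mat r r"
  shows "frob_norm_sq (offdiag_part S) \<le> frob_norm_sq (commutator S (Nmat r))"
proof (rule frob_norm_sq_mono)
  show "offdiag_part S \<in> carrier_mat r r" using S unfolding offdiag_part_def diag_part_def by auto
  show "commutator S (Nmat r) \<in> carrier_mat r r"
    using S Nmat_carrier unfolding commutator_def by (intro minus_carrier_mat mult_carrier_mat)
  fix i j assume ij: "i < r" "j < r"
  have comm: "commutator S (Nmat r) $$ (i, j) = S $$ (i, j) * (real (r - j) - real (r - i))"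
    unfolding commutator_def using S Nmat_carrier ij mult_Nmat_index[OF S ij] Nmat_mult_index[OF S ij]
    by (simp add: algebra_simps)
  show "\<bar>offdiag_part S $$ (i, j)\<bar> \<le> \<bar>commutator S (Nmat r) $$ (i, j)\<bar>"
  proof (cases "i = j")
    case False
    have "1 \<le> \<bar>real (r - j) - real (r - i)\<bar>" using False ij by simp
    then have "\<bar>S $$ (i, j)\<bar> * 1 \<le> \<bar>S $$ (i, j)\<bar> * \<bar>real (r - j) - real (r - i)\<bar>"
      by (rule mult_left_mono) simp
    then show ?thesis using False by (simp add: offdiag_part_index[OF S ij] comm abs_mult)
  qed (use offdiag_part_index[OF S ij] in simp)
qed

lemma stiefel_residual_orthogonal:
  fixes X M :: "real mat"
  assumes X: "X \<in> carrier_mat n r" and XX: "transpose_mat X * X = 1\<^sub>m r"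
    and M: "M \<in> carrier_mat n n"
  shows "transpose_mat (X * transpose_mat X * M * X - M * X) * X = 0\<^sub>m r r"
proof -
  define S where "S = transpose_mat X * M * X"
  have S: "S \<in> carrier_mat r r" unfolding S_def using X M by simp
  have XS: "X * transpose_mat X * M * X = X * S"
    unfolding S_def using X M by (simp add: assoc_mult_mat[of _ n r _ n] assoc_mult_mat[of _ n n _ n])
  have "transpose_mat X * (X * S - M * X) = transpose_mat X * (X * S) - transpose_mat X * (M * X)"
    by (rule mult_minus_distrib_mat[of _ r n _ r]) (use X M S in auto)
  also have "\<dots> = transpose_mat X * X * S - transpose_mat X * M * X"
    using X M S by (simp add: assoc_mult_mat[of _ r n _ r] assoc_mult_mat[of _ r n _ n])
  also have "\<dots> = 0\<^sub>m r r" unfolding XX S_def using X M by simp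
  finally have "transpose_mat X * (X * S - M * X) = 0\<^sub>m r r" .
  moreover have "transpose_mat (transpose_mat X * (X * S - M * X)) = transpose_mat (X * S - M * X) * X"
    using transpose_mult[of "transpose_mat X" r n "X * S - M * X" r] X M S
    by (simp add: minus_carrier_mat)
  ultimately show ?thesis unfolding XS by simp
qed

lemma grad_g_decomposition:
  fixes X M :: "real mat"
  assumes X: "X \<in> carrier_mat n r" and M: "M \<in> carrier_mat n n"
  shows "grad_g M X = (X * transpose_mat X * M * X - M * X) * Nmat r
    - (1/2) \<cdot>\<^sub>m (X * commutator (transpose_mat X * M * X) (Nmat r))"
proof -
  have "(X * transpose_mat X - 1\<^sub>m n) * M = X * transpose_mat X * M - M"
    using X M by (simp add: minus_mult_distrib_mat[of _ n n])
  moreover have "(X * transpose_mat X * M - M) * X = X * transpose_mat X * M * X - M * X"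
    using X M by (simp add: minus_mult_distrib_mat[of _ n n])
  ultimately show ?thesis using X unfolding grad_g_def by simp
qed

lemma frob_norm_sq_grad_g:
  fixes X M :: "real mat"
  assumes X: "X \<in> carrier_mat n r" and XX: "transpose_mat X * X = 1\<^sub>m r"
    and M: "M \<in> carrier_mat n n"
  shows "frob_norm_sq (grad_g M X) = frob_norm_sq ((X * transpose_mat X * M * X - M * X) * Nmat r)
    + 1/4 * frob_norm_sq (commutator (transpose_mat X * M * X) (Nmat r))"
proof -
  define P where "P = X * transpose_mat X * M * X - M * X"
  define C where "C = commutator (transpose_mat X * M * X) (Nmat r)"
  have P: "P \<in> carrier_mat n r" unfolding P_def using X M by (simp add: minus_carrier_mat)
  have C: "C \<in> carrier_mat r r" unfolding C_def commutator_def using X M Nmat_carrier[of r]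
    by (simp add: minus_carrier_mat)
  have "transpose_mat (P * Nmat r) * (X * C) = transpose_mat (Nmat r) * transpose_mat P * (X * C)"
    using P Nmat_carrier[of r] by (simp add: transpose_mult)
  also have "\<dots> = transpose_mat (Nmat r) * (transpose_mat P * (X * C))"
    by (rule assoc_mult_mat[of _ r r _ n _ r]) (use P X C in auto)
  also have "transpose_mat P * (X * C) = transpose_mat P * X * C"
    by (rule assoc_mult_mat[symmetric, of _ r n _ r]) (use P X C in auto)
  also have "transpose_mat P * X = 0\<^sub>m r r"
    unfolding P_def by (rule stiefel_residual_orthogonal[OF X XX M])
  finally have "transpose_mat (P * Nmat r) * (X * C) = 0\<^sub>m r r"
    using C Nmat_carrier[of r] by simp
  then have "frob_norm_sq (P * Nmat r - (1/2) \<cdot>\<^sub>m (X * C))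
      = frob_norm_sq (P * Nmat r) + (1/2)\<^sup>2 * frob_norm_sq (X * C)"
    using P X C Nmat_carrier[of r] by (intro frob_norm_sq_diff_orthogonal) auto
  then show ?thesis
    using grad_g_decomposition[OF X M] frob_norm_sq_mult_isometry[OF X C XX]
    unfolding P_def C_def by (simp add: power2_eq_square)
qed

lemma frob_norm_sq_diag_residual:
  fixes X M :: "real mat"
  assumes X: "X \<in> carrier_mat n r" and XX: "transpose_mat X * X = 1\<^sub>m r"
    and M: "M \<in> carrier_mat n n"
  defines "S \<equiv> transpose_mat X * M * X"
  shows "frob_norm_sq (X * diag_part S - M * X)
    = frob_norm_sq (X * transpose_mat X * M * X - M * X) + frob_norm_sq (offdiag_part S)"
proof -
  define P where "P = X * transpose_mat X * M * X - M * X"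
  define E where "E = offdiag_part S"
  have S: "S \<in> carrier_mat r r" unfolding S_def using X M by simp
  have D: "diag_part S \<in> carrier_mat r r" using S unfolding diag_part_def by simp
  have E: "E \<in> carrier_mat r r" unfolding E_def offdiag_part_def using S D by (simp add: minus_carrier_mat)
  have P: "P \<in> carrier_mat n r" unfolding P_def using X M by (simp add: minus_carrier_mat)
  have "X * E = X * S - X * diag_part S"
    unfolding E_def offdiag_part_def by (rule mult_minus_distrib_mat[of _ n r _ r]) (use X S D in auto)
  moreover have "X * S = X * transpose_mat X * M * X"
    unfolding S_def using X M by (simp add: assoc_mult_mat[of _ n r _ n] assoc_mult_mat[of _ n n _ n])
  ultimately have "X * diag_part S - M * X = P - 1 \<cdot>\<^sub>m (X * E)"
    unfolding P_def using X M S D by (intro eq_matI) auto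
  moreover have "transpose_mat P * (X * E) = 0\<^sub>m r r"
  proof -
    have "transpose_mat P * (X * E) = transpose_mat P * X * E"
      by (rule assoc_mult_mat[symmetric, of _ r n _ r]) (use P X E in auto)
    then show ?thesis unfolding P_def stiefel_residual_orthogonal[OF X XX M] using E by simp
  qed
  ultimately show ?thesis
    using frob_norm_sq_diff_orthogonal[OF P _, of "X * E" 1] frob_norm_sq_mult_isometry[OF X E XX] X E
    unfolding P_def E_def by simp
qed

lemma col_diag_residual:
  fixes X M S :: "real mat"
  assumes X: "X \<in> carrier_mat n r" and M: "M \<in> carrier_mat n n" and S: "S \<in> carrier_mat r r"
    and j: "j < r"
  shows "col (X * diag_part S - M * X) j = S $$ (j, j) \<cdot>\<^sub>v col X j - M *\<^sub>v col X j"
proof (rule eq_vecI)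
  fix i assume "i < dim_vec (S $$ (j, j) \<cdot>\<^sub>v col X j - M *\<^sub>v col X j)"
  then have i: "i < n" using M by simp
  have "(X * diag_part S) $$ (i, j) = X $$ (i, j) * S $$ (j, j)"
    unfolding diag_part_def using S mult_diag_mat_right[OF X i j, of "\<lambda>k l. S $$ (k, l)"] by simp
  then show "col (X * diag_part S - M * X) j $ i = (S $$ (j, j) \<cdot>\<^sub>v col X j - M *\<^sub>v col X j) $ i"
    using X M S i j by (simp add: diag_part_def)
qed (use X M S j in \<open>simp add: diag_part_def\<close>)

lemma stiefel_column_eigenvalue_near:
  fixes X M :: "real mat"
  assumes X: "X \<in> carrier_mat n r" and XX: "transpose_mat X * X = 1\<^sub>m r"
    and M: "M \<in> carrier_mat n n" and sym: "transpose_mat M = M" and j: "j < r"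
  shows "\<exists>\<mu>. eigenvalue M \<mu> \<and> \<bar>col X j \<bullet> (M *\<^sub>v col X j) - \<mu>\<bar>
    \<le> frob_norm (X * diag_part (transpose_mat X * M * X) - M * X)"
proof -
  define x where "x = col X j"
  define S where "S = transpose_mat X * M * X"
  define d where "d = x \<bullet> (M *\<^sub>v x)"
  have x: "x \<in> carrier_vec n" unfolding x_def using X j by simp
  have "x \<bullet> x = (transpose_mat X * X) $$ (j, j)" unfolding x_def using X j by simp
  then have x_unit: "x \<bullet> x = 1" using XX j by simp
  have S: "S \<in> carrier_mat r r" unfolding S_def using X M by simp
  have "S = transpose_mat X * (M * X)" unfolding S_def using X M by (simp add: assoc_mult_mat[of _ r n _ n])
  then have d: "S $$ (j, j) = d" unfolding d_def x_def using X M j by (simp add: mult_mat_vec_def)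
  obtain \<mu> where \<mu>: "eigenvalue M \<mu>" and le: "(d - \<mu>)\<^sup>2 \<le> (M *\<^sub>v x - d \<cdot>\<^sub>v x) \<bullet> (M *\<^sub>v x - d \<cdot>\<^sub>v x)"
    using symmetric_eigenvalue_near[OF M sym x x_unit] by blast
  have "M *\<^sub>v x - d \<cdot>\<^sub>v x = - col (X * diag_part S - M * X) j"
    unfolding col_diag_residual[OF X M S j] d x_def using X M j by (auto simp: vec_eq_iff)
  then have "(M *\<^sub>v x - d \<cdot>\<^sub>v x) \<bullet> (M *\<^sub>v x - d \<cdot>\<^sub>v x) \<le> frob_norm_sq (X * diag_part S - M * X)"
    using col_scalar_prod_le_frob_norm_sq[of "X * diag_part S - M * X" n r j] X M S j
    by (simp add: diag_part_def minus_carrier_mat)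
  then have "\<bar>d - \<mu>\<bar> \<le> frob_norm (X * diag_part S - M * X)"
    using le unfolding frob_norm_eq_sqrt by (intro real_le_rsqrt) simp
  then show ?thesis using \<mu> unfolding d_def x_def S_def by blast
qed

theorem mainTheorem7:
  fixes M X :: "real mat" and N r :: nat and \<epsilon> :: real
  assumes M_carrier: "M \<in> carrier_mat N N"
    and M_sym: "transpose_mat M = M"
    and eps_pos: "\<epsilon> > 0"
    and X_St: "X \<in> stiefel N r"
    and grad_small: "frob_norm (grad_g M X) \<le> \<epsilon>"
  shows "frob_norm (offdiag_part (transpose_mat X * M * X)) \<le> 2 * \<epsilon>
    \<and> frob_norm (X * transpose_mat X * M * X - M * X) \<le> \<epsilon>
    \<and> frob_norm (X * diag_part (transpose_mat X * M * X) - M * X) \<le> 3 * \<epsilon>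
    \<and> (\<forall>j<r. \<exists>lam. eigenvalue M lam \<and>
           \<bar>col X j \<bullet> (M *\<^sub>v col X j) - lam\<bar> \<le> 3 * \<epsilon>)"
proof -
  have X: "X \<in> carrier_mat N r" and XX: "transpose_mat X * X = 1\<^sub>m r"
    using X_St unfolding stiefel_def by auto
  define P where "P = X * transpose_mat X * M * X - M * X"
  define S where "S = transpose_mat X * M * X"
  have P: "P \<in> carrier_mat N r" unfolding P_def using X M_carrier by (simp add: minus_carrier_mat)
  have S: "S \<in> carrier_mat r r" unfolding S_def using X M_carrier by simp
  have grad: "frob_norm_sq (P * Nmat r) + 1/4 * frob_norm_sq (commutator S (Nmat r)) \<le> \<epsilon>\<^sup>2"
    using grad_small frob_norm_sq_grad_g[OF X XX M_carrier] eps_pos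
    unfolding P_def S_def by (simp add: frob_norm_le_iff)
  have P_le: "frob_norm_sq P \<le> \<epsilon>\<^sup>2"
    using grad frob_norm_sq_le_mult_Nmat[OF P] frob_norm_sq_nonneg[of "commutator S (Nmat r)"]
    by linarith
  have E_le: "frob_norm_sq (offdiag_part S) \<le> (2 * \<epsilon>)\<^sup>2"
    using grad frob_norm_sq_offdiag_le_commutator_Nmat[OF S] frob_norm_sq_nonneg[of "P * Nmat r"]
    by (simp add: power_mult_distrib)
  have "frob_norm_sq (X * diag_part S - M * X) = frob_norm_sq P + frob_norm_sq (offdiag_part S)"
    using frob_norm_sq_diag_residual[OF X XX M_carrier] unfolding P_def S_def .
  also have "\<dots> \<le> \<epsilon>\<^sup>2 + (2 * \<epsilon>)\<^sup>2" using P_le E_le by (rule add_mono)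
  also have "\<dots> \<le> (3 * \<epsilon>)\<^sup>2" by (simp add: power_mult_distrib)
  finally have "frob_norm_sq (X * diag_part S - M * X) \<le> (3 * \<epsilon>)\<^sup>2" .
  then have Y_le: "frob_norm (X * diag_part S - M * X) \<le> 3 * \<epsilon>"
    using eps_pos by (simp add: frob_norm_le_iff)
  have "\<forall>j<r. \<exists>lam. eigenvalue M lam \<and> \<bar>col X j \<bullet> (M *\<^sub>v col X j) - lam\<bar> \<le> 3 * \<epsilon>"
    using stiefel_column_eigenvalue_near[OF X XX M_carrier M_sym] Y_le
    unfolding S_def by (meson order_trans)
  then show ?thesis
    using P_le E_le Y_le eps_pos unfolding P_def S_def by (simp add: frob_norm_le_iff)
qed

end
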